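(* Let $n_0, L\in\mathbb{N}_+$, $n_1,\dots,n_L\in\mathbb{N}_+$, and let $h_l\in\mathrm{RL}(n_{l-1},n_l)$ for $l=1,\dots,L$, with $\mathbf{h}=(h_1,\dots,h_L)$. Let $\gamma\in\Gamma$. Then $$|\mathcal{S}_{\mathbf{h}}|\le\big\|B^{(\gamma)}_{n_L}M_{n_{L-1},n_L}\cdots B^{(\gamma)}_{n_1}M_{n_0,n_1}e_{n_0+1}\big\|_1,$$ where $e_{n_0+1}\in\mathbb{R}^{n_0+1}$ is the standard unit vector with $1$ in position $n_0+1$ and $0$ elsewhere.
   Context: $\mathbb{N}=\{0,1,2,\dots\}$, $\mathbb{N}_+=\mathbb{N}\setminus\{0\}$, $\sigma(x)=\max(0,x)$. For $n,n'\in\mathbb{N}_+$, $\mathrm{RL}(n,n')$ is the set of maps $h:\mathbb{R}^n\to\mathbb{R}^{n'}$, $h(x)_i=\sigma(\langle x,w_i\rangle+b_i)$, for some $W\in\mathbb{R}^{n'\times n}$ with rows $w_i$ and $b\in\mathbb{R}^{n'}$. Signature: $S_h(x)_i=1$ iff $\langle x,w_i\rangle+b_i>0$, else $0$; $\mathcal{S}_h=\{S_h(x):x\in\mathbb{R}^n\}$. Convention: $\mathrm{RL}(0,n')$ consists of constant maps $\{0\}\to\mathbb{R}^{n'}$ and for such $h$, $\mathcal{H}_{n'}(\mathcal{S}_h)={\rm e}_0$. Multi signature: $S_{\mathbf{h}}(x)=(S_{h_1}(x),S_{h_2}(h_1(x)),\dots,S_{h_L}(h_{L-1}\circ\dots\circ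 h_1(x)))$, $\mathcal{S}_{\mathbf{h}}=\{S_{\mathbf{h}}(x):x\in\mathbb{R}^{n_0}\}$; $|s|=\sum_i s_i$. $V$: sequences $(v_j)_{j\in\mathbb{N}}$ in $\mathbb{N}$ with finite sum; ${\rm e}_i$ has $({\rm e}_i)_j=\delta_{ij}$. $v\preceq w$ iff $\sum_{j\ge J}v_j\le\sum_{j\ge J}w_j$ for all $J$. For a finite family, $\max_i(v^{(i)})_J=\max_i\sum_{j\ge J}v^{(i)}_j-\max_i\sum_{j\ge J+1}v^{(i)}_j$. $\mathcal{H}_{n'}(\mathcal{S})=(|\{s\in\mathcal{S}:|s|=j\}|)_j$ for $\mathcal{S}\subseteq\{0,1\}^{n'}$. $\Gamma$ is the set of families $(\gamma_{n,n'})_{n'\in\mathbb{N}_+,n\in\{0,\dots,n'\}}$ in $V$ with (i) $\max\{\mathcal{H}_{n'}(\mathcal{S}_h):h\in\mathrm{RL}(n,n')\}\preceq\gamma_{n,n'}$ and (ii) $n\le\tilde n\le n'\Rightarrow\gamma_{n,n'}\preceq\gamma_{\tilde n,n'}$. Clipping: $\mathrm{cl}_{i^*}(v)_i=v_i$ ($i<i^*$), $\sum_{j\ge i^*}v_j$ ($i=i^*$), $0$ ($i>i^*$). Bound matrix: for $\gamma\in\Gamma$, $n'\in\mathbb{N}_+$, $B^{(\gamma)}_{n'}\in\mathbb{N}^{(n'+1)\times(n'+1)}$ with $(B^{(\gamma)}_{n'})_{i,j}=(\mathrm{cl}_{j-1}(\gamma_{j-1,n'}))_{i-1}$ for $i,j\in\{1,\dots,n'+1\}$.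 Connector matrix: for $n,n'\in\mathbb{N}$, $M_{n,n'}\in\mathbb{R}^{(n'+1)\times(n+1)}$ with $(M_{n,n'})_{i,j}=\delta_{i,\min(j,n'+1)}$. *)

theory Defs
  imports "Jordan_Normal_Form.Matrix"
begin

definition relu :: "real \<Rightarrow> real" where
  "relu x = max 0 x"

definition RL :: "nat \<Rightarrow> nat \<Rightarrow> (real mat \<times> real vec) set" where
  "RL n n' = {(W, b). W \<in> carrier_mat n' n \<and> b \<in> carrier_vec n'}"

definition relu_layer :: "real mat \<times> real vec \<Rightarrow> real vec \<Rightarrow> real vec" where
  "relu_layer h x = map_vec relu (fst h *\<^sub>v x + snd h)"

definition sig :: "real mat \<times> real vec \<Rightarrow> real vec \<Rightarrow> nat vec" where
  "sig h x = vec (dim_row (fst h)) (\<lambda>i. if (fst h *\<^sub>v x + snd h) $ i > 0 then 1 else 0)"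

definition sigs :: "real mat \<times> real vec \<Rightarrow> nat \<Rightarrow> nat vec set" where
  "sigs h n = sig h ` carrier_vec n"

fun multi_sig :: "(real mat \<times> real vec) list \<Rightarrow> real vec \<Rightarrow> nat vec list" where
  "multi_sig [] x = []"
| "multi_sig (h # hs) x = sig h x # multi_sig hs (relu_layer h x)"

definition multi_sigs :: "(real mat \<times> real vec) list \<Rightarrow> nat \<Rightarrow> nat vec list set" where
  "multi_sigs hs n0 = multi_sig hs ` carrier_vec n0"

definition weight :: "nat vec \<Rightarrow> nat" where
  "weight s = (\<Sum>i<dim_vec s. s $ i)"

definition hist :: "nat vec set \<Rightarrow> nat \<Rightarrow> nat" where
  "hist S = (\<lambda>j. card {s \<in> S. weight s = j})"

definition in_V :: "(nat \<Rightarrow> nat) \<Rightarrow> bool" where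
  "in_V v \<longleftrightarrow> finite {j. v j \<noteq> 0}"

definition e_seq :: "nat \<Rightarrow> nat \<Rightarrow> nat" where
  "e_seq i = (\<lambda>j. if j = i then 1 else 0)"

definition tail :: "(nat \<Rightarrow> nat) \<Rightarrow> nat \<Rightarrow> nat" where
  "tail v J = (\<Sum>j | J \<le> j \<and> v j \<noteq> 0. v j)"

definition preceq :: "(nat \<Rightarrow> nat) \<Rightarrow> (nat \<Rightarrow> nat) \<Rightarrow> bool" where
  "preceq v w \<longleftrightarrow> (\<forall>J. tail v J \<le> tail w J)"

text \<open>Maximum of a finite family in V.\<close>
definition vmax :: "(nat \<Rightarrow> nat) set \<Rightarrow> nat \<Rightarrow> nat" where
  "vmax F = (\<lambda>J. Max ((\<lambda>v. tail v J) ` F) - Max ((\<lambda>v. tail v (Suc J)) ` F))"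

definition maxHist :: "nat \<Rightarrow> nat \<Rightarrow> nat \<Rightarrow> nat" where
  "maxHist n n' = (if n = 0 then e_seq 0 else vmax ((\<lambda>h. hist (sigs h n)) ` RL n n'))"

definition in_Gamma :: "(nat \<Rightarrow> nat \<Rightarrow> nat \<Rightarrow> nat) \<Rightarrow> bool" where
  "in_Gamma \<gamma> \<longleftrightarrow>
     (\<forall>n' n. 1 \<le> n' \<and> n \<le> n' \<longrightarrow> in_V (\<gamma> n n') \<and> preceq (maxHist n n') (\<gamma> n n')) \<and>
     (\<forall>n' n m. 1 \<le> n' \<and> n \<le> m \<and> m \<le> n' \<longrightarrow> preceq (\<gamma> n n') (\<gamma> m n'))"

definition clip :: "nat \<Rightarrow> (nat \<Rightarrow> nat) \<Rightarrow> nat \<Rightarrow> nat" where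
  "clip istar v = (\<lambda>i. if i < istar then v i else if i = istar then tail v istar else 0)"

definition bound_mat :: "(nat \<Rightarrow> nat \<Rightarrow> nat \<Rightarrow> nat) \<Rightarrow> nat \<Rightarrow> real mat" where
  "bound_mat \<gamma> n' = mat (n' + 1) (n' + 1) (\<lambda>(i, j). real (clip j (\<gamma> j n') i))"

definition conn_mat :: "nat \<Rightarrow> nat \<Rightarrow> real mat" where
  "conn_mat n n' = mat (n' + 1) (n + 1) (\<lambda>(i, j). if i = min j n' then 1 else 0)"

fun chain_mat :: "(nat \<Rightarrow> nat \<Rightarrow> nat \<Rightarrow> nat) \<Rightarrow> (nat \<Rightarrow> nat) \<Rightarrow> nat \<Rightarrow> real mat" where
  "chain_mat \<gamma> ns 0 = 1\<^sub>m (ns 0 + 1)"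
| "chain_mat \<gamma> ns (Suc l) = bound_mat \<gamma> (ns (Suc l)) * conn_mat (ns l) (ns (Suc l)) * chain_mat \<gamma> ns l"

definition norm1 :: "real vec \<Rightarrow> real" where
  "norm1 v = (\<Sum>i<dim_vec v. \<bar>v $ i\<bar>)"

end

theory Submission
  imports Defs
begin

(* The inputs realising a prefix p = (s_1, ..., s_l) of multi
   signatures are mapped by the first l layers into an affine image of R^d with
   d = min(n_0, |s_1|, ..., |s_l|): a ReLU layer is affine on each activation region, and there
   its output is supported on the |s| active neurons. Hence the signatures of the next layer on
   that region are those of a layer in RL(min(d, n'), n') and are controlled by gamma through
   the tail sums of their histogram. Counting prefixes by the threshold of d, Abel summation of
   these column bounds over all prefixes amounts to one multiplication by B M. *)

definition bin_vecs :: "nat \<Rightarrow> nat vec set" where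
  "bin_vecs n = {s \<in> carrier_vec n. \<forall>i<n. s $ i \<le> 1}"

lemma finite_bin_vecs: "finite (bin_vecs n)"
proof (rule finite_subset)
  show "bin_vecs n \<subseteq> (\<lambda>f. vec n f) ` ({..<n} \<rightarrow>\<^sub>E {0..1})"
  proof
    fix s assume s: "s \<in> bin_vecs n"
    then have "s = vec n (restrict (($) s) {..<n})"
      by (intro eq_vecI) (auto simp: bin_vecs_def)
    moreover have "restrict (($) s) {..<n} \<in> {..<n} \<rightarrow>\<^sub>E {0..1}"
      using s by (auto simp: bin_vecs_def)
    ultimately show "s \<in> (\<lambda>f. vec n f) ` ({..<n} \<rightarrow>\<^sub>E {0..1})" by blast
  qed
qed (simp add: finite_PiE)

lemma dim_vec_bin_vecs: "s \<in> bin_vecs n \<Longrightarrow> dim_vec s = n"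
  by (simp add: bin_vecs_def)

lemma sig_in_bin_vecs: "sig h x \<in> bin_vecs (dim_row (fst h))"
  unfolding sig_def bin_vecs_def by auto

lemma sigs_subset_bin_vecs: "h \<in> RL n n' \<Longrightarrow> sigs h n \<subseteq> bin_vecs n'"
  using sig_in_bin_vecs by (fastforce simp: sigs_def RL_def)

lemma finite_sigs: "h \<in> RL n n' \<Longrightarrow> finite (sigs h n)"
  using sigs_subset_bin_vecs finite_bin_vecs by (rule finite_subset)

lemma weight_le_dim: "s \<in> bin_vecs n \<Longrightarrow> weight s \<le> n"
  using sum_mono[of "{..<n}" "\<lambda>i. s $ i" "\<lambda>_. 1"] by (auto simp: bin_vecs_def weight_def)

lemma in_V_iff_bounded: "in_V v \<longleftrightarrow> (\<exists>N. \<forall>j\<ge>N. v j = 0)"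
proof
  assume "in_V v"
  then obtain N where "\<forall>j\<in>{j. v j \<noteq> 0}. j < N"
    unfolding in_V_def finite_nat_set_iff_bounded by blast
  then show "\<exists>N. \<forall>j\<ge>N. v j = 0"
    by (meson leD mem_Collect_eq)
next
  assume "\<exists>N. \<forall>j\<ge>N. v j = 0"
  then obtain N where N: "\<forall>j\<ge>N. v j = 0" ..
  have "{j. v j \<noteq> 0} \<subseteq> {..<N}"
  proof
    fix j assume "j \<in> {j. v j \<noteq> 0}"
    then have "\<not> N \<le> j" using N by auto
    then show "j \<in> {..<N}" by simp
  qed
  then show "in_V v"
    unfolding in_V_def by (rule finite_subset) simp
qed

lemma tail_eq_sum:
  assumes "\<forall>j\<ge>N. v j = 0"
  shows "tail v J = sum v {J..<N}"
  unfolding tail_def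
proof (rule sum.mono_neutral_left)
  show "{j. J \<le> j \<and> v j \<noteq> 0} \<subseteq> {J..<N}"
  proof
    fix j assume "j \<in> {j. J \<le> j \<and> v j \<noteq> 0}"
    then have "J \<le> j" "\<not> N \<le> j" using assms by auto
    then show "j \<in> {J..<N}" by simp
  qed
qed auto

lemma tail_split:
  assumes "in_V v" "J \<le> k"
  shows "tail v J = sum v {J..<k} + tail v k"
proof -
  obtain N where N: "\<forall>j\<ge>N. v j = 0" "k \<le> N"
    using assms(1) unfolding in_V_iff_bounded by (metis le_trans nat_le_linear)
  have "tail v J = sum v {J..<k} + sum v {k..<N}"
    using tail_eq_sum[OF N(1)] sum.atLeastLessThan_concat assms(2) N(2) by metis
  then show ?thesis
    using tail_eq_sum[OF N(1)] by simp
qed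

lemma tail_Suc: "in_V v \<Longrightarrow> tail v J = v J + tail v (Suc J)"
  using tail_split[of v J "Suc J"] by simp

lemma tail_antimono: "in_V v \<Longrightarrow> J \<le> K \<Longrightarrow> tail v K \<le> tail v J"
  using tail_split[of v J K] by simp

lemma tail_hist:
  assumes "finite S"
  shows "tail (hist S) J = card {s \<in> S. J \<le> weight s}"
proof -
  let ?A = "{j. J \<le> j \<and> hist S j \<noteq> 0}"
  have A: "?A = {j \<in> weight ` S. J \<le> j}"
    using assms by (auto simp: hist_def card_eq_0_iff)
  have "tail (hist S) J = (\<Sum>j\<in>{j \<in> weight ` S. J \<le> j}. card {s \<in> S. weight s = j})"
    unfolding tail_def A by (simp add: hist_def)
  also have "\<dots> = card (\<Union>j\<in>{j \<in> weight ` S. J \<le> j}. {s \<in> S. weight s = j})"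
    using assms by (intro card_UN_disjoint[symmetric]) auto
  also have "(\<Union>j\<in>{j \<in> weight ` S. J \<le> j}. {s \<in> S. weight s = j}) = {s \<in> S. J \<le> weight s}"
    by auto
  finally show ?thesis .
qed

lemma in_V_hist: "finite S \<Longrightarrow> in_V (hist S)"
  unfolding in_V_def hist_def
  by (rule finite_subset[of _ "weight ` S"]) (auto simp: card_eq_0_iff)

lemma tail_vmax:
  assumes F: "finite F" "F \<noteq> {}" "\<forall>v\<in>F. in_V v"
  shows "tail (vmax F) J = Max ((\<lambda>v. tail v J) ` F)"
proof -
  define Mx where "Mx J = Max ((\<lambda>v. tail v J) ` F)" for J
  have Mx_antimono: "Mx K \<le> Mx J" if "J \<le> K" for J K
  proof -
    have "tail v K \<le> Mx J" if "v \<in> F" for v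
      using tail_antimono[of v J K] F \<open>J \<le> K\<close> that by (auto simp: Mx_def Max_ge_iff)
    then show ?thesis
      using F by (simp add: Mx_def[of K])
  qed
  have "finite (\<Union>v\<in>F. {j. v j \<noteq> 0})"
    using F by (auto simp: in_V_def)
  then obtain N where "\<forall>j\<in>(\<Union>v\<in>F. {j. v j \<noteq> 0}). j < N"
    unfolding finite_nat_set_iff_bounded by blast
  then have N: "\<forall>v\<in>F. \<forall>j\<ge>N. v j = 0"
    using not_le by fastforce
  have Mx_vanishes: "Mx j = 0" if "N \<le> j" for j
  proof -
    have "tail v j = 0" if "v \<in> F" for v
      using N \<open>N \<le> j\<close> that tail_eq_sum[of j v j] by simp
    then show ?thesis
      using F by (simp add: Mx_def)
  qed
  have vmax: "vmax F j = Mx j - Mx (Suc j)" for j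
    by (simp add: vmax_def Mx_def)
  have V: "in_V (vmax F)"
    unfolding in_V_iff_bounded vmax using Mx_vanishes by (intro exI[of _ N]) simp
  have tail_vmax_beyond: "tail (vmax F) j = Mx j" if "N \<le> j" for j
    using Mx_vanishes that tail_eq_sum[of j "vmax F" j] by (simp add: vmax)
  have "tail (vmax F) J = Mx J"
  proof (cases "N \<le> J")
    case False
    then have "J \<le> N" by simp
    then show ?thesis
    proof (induction J rule: inc_induct)
      case base
      show ?case by (rule tail_vmax_beyond) simp
    next
      case (step j)
      then show ?case
        using tail_Suc[OF V, of j] Mx_antimono[of j "Suc j"] vmax[of j] by linarith
    qed
  qed (rule tail_vmax_beyond)
  then show ?thesis by (simp add: Mx_def)
qed

lemma carrier_vec_0: "carrier_vec 0 = {0\<^sub>v 0}"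
  by (auto simp: vec_eq_iff)

lemma RL_nonempty: "(0\<^sub>m n' n, 0\<^sub>v n') \<in> RL n n'"
  unfolding RL_def by simp

lemma tail_hist_sigs_le_maxHist:
  assumes "1 \<le> n" "h \<in> RL n n'"
  shows "tail (hist (sigs h n)) J \<le> tail (maxHist n n') J"
proof -
  define F where "F = (\<lambda>h. hist (sigs h n)) ` RL n n'"
  have "F \<subseteq> hist ` Pow (bin_vecs n')"
    using sigs_subset_bin_vecs by (auto simp: F_def)
  then have "finite F"
    using finite_bin_vecs by (meson finite_Pow_iff finite_imageI finite_subset)
  moreover have "F \<noteq> {}" "\<forall>v\<in>F. in_V v"
    using RL_nonempty[of n' n] finite_sigs in_V_hist by (auto simp: F_def)
  moreover have "hist (sigs h n) \<in> F"
    using assms(2) by (simp add: F_def)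
  ultimately show ?thesis
    using assms(1) by (simp add: maxHist_def F_def[symmetric] tail_vmax)
qed

(* For m = 0 the only signature may have positive weight, while the convention
   maxHist 0 n' = e_0 bounds just the total count; hence J \<le> m. *)
lemma card_sigs_weight_ge_le_tail_gamma:
  assumes G: "in_Gamma \<gamma>" and "1 \<le> n'" "m \<le> n'" and h: "h \<in> RL m n'" and "J \<le> m"
  shows "card {s \<in> sigs h m. J \<le> weight s} \<le> tail (\<gamma> m n') J"
proof -
  have preceq: "preceq (maxHist m n') (\<gamma> m n')"
    using G assms(2,3) unfolding in_Gamma_def by blast
  show ?thesis
  proof (cases "m = 0")
    case True
    have "card {s \<in> sigs h m. J \<le> weight s} \<le> card (sigs h 0)"
      using True finite_sigs[OF h] by (intro card_mono) auto
    also have "\<dots> \<le> card {0\<^sub>v 0 :: real vec}"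
      unfolding sigs_def by (metis card_image_le carrier_vec_0 finite.emptyI finite.insertI)
    also have "\<dots> = tail (maxHist 0 n') 0"
      by (simp add: maxHist_def tail_eq_sum[of 1] e_seq_def)
    also have "\<dots> \<le> tail (\<gamma> m n') J"
      using preceq True assms(5) by (simp add: preceq_def)
    finally show ?thesis .
  next
    case False
    then have "card {s \<in> sigs h m. J \<le> weight s} \<le> tail (maxHist m n') J"
      using tail_hist[OF finite_sigs[OF h]] tail_hist_sigs_le_maxHist[OF _ h] by simp
    then show ?thesis
      using preceq le_trans unfolding preceq_def by blast
  qed
qed

lemma tail_clip:
  assumes "in_V v"
  shows "tail (clip k v) J = (if J \<le> k then tail v J else 0)"
proof -
  have vanish: "\<forall>j\<ge>Suc k. clip k v j = 0"
    by (simp add: clip_def)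
  show ?thesis
  proof (cases "J \<le> k")
    case True
    have "tail (clip k v) J = sum (clip k v) {J..<k} + clip k v k"
      using tail_eq_sum[OF vanish] True by simp
    also have "sum (clip k v) {J..<k} = sum v {J..<k}"
      by (rule sum.cong) (auto simp: clip_def)
    finally show ?thesis
      using tail_split[OF assms True] True by (simp add: clip_def)
  next
    case False
    then show ?thesis
      using tail_eq_sum[OF vanish, of J] by simp
  qed
qed

definition bound_col_tail :: "(nat \<Rightarrow> nat \<Rightarrow> nat \<Rightarrow> nat) \<Rightarrow> nat \<Rightarrow> nat \<Rightarrow> nat \<Rightarrow> real" where
  "bound_col_tail \<gamma> n' J k = (\<Sum>i\<in>{J..<n'+1}. real (clip k (\<gamma> k n') i))"

lemma bound_col_tail_nonneg: "0 \<le> bound_col_tail \<gamma> n' J k"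
  by (simp add: bound_col_tail_def sum_nonneg)

lemma bound_col_tail_eq:
  assumes "in_V (\<gamma> k n')" "k \<le> n'"
  shows "bound_col_tail \<gamma> n' J k = (if J \<le> k then real (tail (\<gamma> k n') J) else 0)"
proof -
  have "\<forall>j\<ge>n'+1. clip k (\<gamma> k n') j = 0"
    using assms(2) by (simp add: clip_def)
  then have "bound_col_tail \<gamma> n' J k = real (tail (clip k (\<gamma> k n')) J)"
    unfolding bound_col_tail_def by (simp only: tail_eq_sum of_nat_sum)
  then show ?thesis
    using tail_clip[OF assms(1)] by simp
qed

lemma bound_col_tail_mono:
  assumes G: "in_Gamma \<gamma>" and "1 \<le> n'" "k \<le> k'" "k' \<le> n'"
  shows "bound_col_tail \<gamma> n' J k \<le> bound_col_tail \<gamma> n' J k'"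
proof -
  have "in_V (\<gamma> k n')" "in_V (\<gamma> k' n')" "preceq (\<gamma> k n') (\<gamma> k' n')"
    using G assms(2-4) unfolding in_Gamma_def by auto
  then show ?thesis
    using assms(3,4) by (auto simp: bound_col_tail_eq preceq_def)
qed

lemma sum_weighted_layer_cake:
  fixes g :: "nat \<Rightarrow> real" and w :: "'a \<Rightarrow> real"
  assumes X: "finite X" and f: "\<forall>x\<in>X. f x \<le> N"
  shows "(\<Sum>x\<in>X. w x * g (f x))
    = (\<Sum>K\<le>N. (g K - (if K = 0 then 0 else g (K - 1))) * (\<Sum>x\<in>{x\<in>X. K \<le> f x}. w x))"
proof -
  define \<delta> where "\<delta> K = g K - (if K = 0 then 0 else g (K - 1))" for K
  have g_sum: "g k = (\<Sum>K\<le>N. if K \<le> k then \<delta> K else 0)" if "k \<le> N" for k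
  proof -
    have "g k = sum \<delta> {..k}"
      by (induction k) (simp_all add: \<delta>_def)
    also have "{..k} = {K\<in>{..N}. K \<le> k}"
      using that by auto
    finally show ?thesis
      by (rule trans) (rule sum.inter_filter, simp)
  qed
  have "(\<Sum>x\<in>X. w x * g (f x)) = (\<Sum>x\<in>X. \<Sum>K\<le>N. if K \<le> f x then \<delta> K * w x else 0)"
    using f by (intro sum.cong) (auto simp: g_sum sum_distrib_left intro!: sum.cong)
  also have "\<dots> = (\<Sum>K\<le>N. \<Sum>x\<in>X. if K \<le> f x then \<delta> K * w x else 0)"
    by (rule sum.swap)
  also have "\<dots> = (\<Sum>K\<le>N. \<delta> K * (\<Sum>x\<in>{x\<in>X. K \<le> f x}. w x))"
    using X by (auto simp: sum.inter_filter sum_distrib_left intro!: sum.cong)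
  finally show ?thesis
    by (simp add: \<delta>_def)
qed

lemma sum_mono_fun_le_of_tail_counts:
  fixes g v :: "nat \<Rightarrow> real"
  assumes X: "finite X" and g: "mono g" "0 \<le> g 0"
    and counts: "\<And>K. real (card {x\<in>X. K \<le> f x}) \<le> (\<Sum>j\<in>{K..<M}. v j)"
  shows "(\<Sum>x\<in>X. g (f x)) \<le> (\<Sum>j<M. v j * g j)"
proof -
  define N where "N = M + Max (f ` X)"
  have fN: "\<forall>x\<in>X. f x \<le> N"
    using X by (simp add: N_def trans_le_add2)
  have MN: "\<forall>j\<in>{..<M}. j \<le> N"
    by (simp add: N_def)
  have ivl_eq: "{j\<in>{..<M}. K \<le> j} = {K..<M}" for K
    by auto
  define \<delta> where "\<delta> K = g K - (if K = 0 then 0 else g (K - 1))" for K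
  have "0 \<le> \<delta> K" for K
    using g by (cases K) (auto simp: \<delta>_def mono_def)
  then have "(\<Sum>K\<le>N. \<delta> K * (\<Sum>x\<in>{x\<in>X. K \<le> f x}. 1))
      \<le> (\<Sum>K\<le>N. \<delta> K * (\<Sum>j\<in>{K..<M}. v j))"
    using counts by (intro sum_mono mult_left_mono) auto
  then show ?thesis
    using sum_weighted_layer_cake[OF X fN, of "\<lambda>_. 1" g]
      sum_weighted_layer_cake[of "{..<M}" "\<lambda>j. j" N v g, unfolded ivl_eq] MN
    by (simp add: \<delta>_def)
qed

lemma mult_mat_vec_nth:
  assumes "A \<in> carrier_mat r k" "z \<in> carrier_vec k" "i < r"
  shows "(A *\<^sub>v z) $ i = (\<Sum>j<k. A $$ (i, j) * z $ j)"
  using assms by (auto simp: scalar_prod_def atLeast0LessThan intro!: sum.cong)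

lemma sum_tail_bound_mat_mult:
  assumes "w \<in> carrier_vec (n'+1)"
  shows "(\<Sum>i\<in>{J..<n'+1}. (bound_mat \<gamma> n' *\<^sub>v w) $ i)
    = (\<Sum>k<n'+1. w $ k * bound_col_tail \<gamma> n' J k)"
proof -
  have "(\<Sum>i\<in>{J..<n'+1}. (bound_mat \<gamma> n' *\<^sub>v w) $ i)
      = (\<Sum>i\<in>{J..<n'+1}. \<Sum>k<n'+1. real (clip k (\<gamma> k n') i) * w $ k)"
    using assms by (intro sum.cong refl, subst mult_mat_vec_nth[of _ "n'+1" "n'+1"]) (auto simp: bound_mat_def)
  also have "\<dots> = (\<Sum>k<n'+1. \<Sum>i\<in>{J..<n'+1}. real (clip k (\<gamma> k n') i) * w $ k)"
    by (rule sum.swap)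
  also have "\<dots> = (\<Sum>k<n'+1. w $ k * bound_col_tail \<gamma> n' J k)"
    unfolding bound_col_tail_def sum_distrib_left by (intro sum.cong refl) (simp add: mult.commute)
  finally show ?thesis .
qed

lemma sum_conn_mat_mult:
  fixes f :: "nat \<Rightarrow> real"
  assumes "v \<in> carrier_vec (n+1)"
  shows "(\<Sum>k<n'+1. (conn_mat n n' *\<^sub>v v) $ k * f k) = (\<Sum>j<n+1. v $ j * f (min j n'))"
proof -
  have "(\<Sum>k<n'+1. (conn_mat n n' *\<^sub>v v) $ k * f k)
      = (\<Sum>k<n'+1. \<Sum>j<n+1. if k = min j n' then v $ j * f k else 0)"
    using assms
    by (intro sum.cong refl, subst mult_mat_vec_nth[of _ "n'+1" "n+1"])
      (auto simp: conn_mat_def sum_distrib_right simp del: sum.lessThan_Suc intro!: sum.cong)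
  also have "\<dots> = (\<Sum>j<n+1. \<Sum>k<n'+1. if k = min j n' then v $ j * f k else 0)"
    by (rule sum.swap)
  also have "\<dots> = (\<Sum>j<n+1. v $ j * f (min j n'))"
    by (intro sum.cong refl) (simp del: sum.lessThan_Suc)
  finally show ?thesis .
qed

lemma chain_mat_carrier: "chain_mat \<gamma> ns l \<in> carrier_mat (ns l + 1) (ns 0 + 1)"
  by (induction l) (auto simp: bound_mat_def conn_mat_def)

lemma chain_mat_Suc_mult_vec:
  assumes "e \<in> carrier_vec (ns 0 + 1)"
  shows "chain_mat \<gamma> ns (Suc l) *\<^sub>v e
    = bound_mat \<gamma> (ns (Suc l)) *\<^sub>v (conn_mat (ns l) (ns (Suc l)) *\<^sub>v (chain_mat \<gamma> ns l *\<^sub>v e))"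
proof -
  have B: "bound_mat \<gamma> (ns (Suc l)) \<in> carrier_mat (ns (Suc l) + 1) (ns (Suc l) + 1)"
    by (simp add: bound_mat_def)
  have M: "conn_mat (ns l) (ns (Suc l)) \<in> carrier_mat (ns (Suc l) + 1) (ns l + 1)"
    by (simp add: conn_mat_def)
  have C: "chain_mat \<gamma> ns l *\<^sub>v e \<in> carrier_vec (ns l + 1)"
    using chain_mat_carrier assms by (rule mult_mat_vec_carrier)
  show ?thesis
    using assoc_mult_mat_vec[OF mult_carrier_mat[OF B M] chain_mat_carrier assms]
      assoc_mult_mat_vec[OF B M C] by simp
qed

definition forward :: "(real mat \<times> real vec) list \<Rightarrow> real vec \<Rightarrow> real vec" where
  "forward hs x = foldl (\<lambda>y h. relu_layer h y) x hs"

definition region :: "(real mat \<times> real vec) list \<Rightarrow> nat \<Rightarrow> nat vec list \<Rightarrow> real vec set" where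
  "region hs n0 p = {x \<in> carrier_vec n0. multi_sig hs x = p}"

(* min(n0, |s_1|, ..., |s_l|), a bound on the dimension of forward hs ` region hs n0 p *)
definition sig_dim :: "nat \<Rightarrow> nat vec list \<Rightarrow> nat" where
  "sig_dim n0 p = foldl (\<lambda>d s. min d (weight s)) n0 p"

lemma multi_sig_snoc: "multi_sig (hs @ [h]) x = multi_sig hs x @ [sig h (forward hs x)]"
  by (induction hs arbitrary: x) (simp_all add: forward_def)

lemma forward_snoc: "forward (hs @ [h]) x = relu_layer h (forward hs x)"
  by (simp add: forward_def)

lemma sig_dim_snoc: "sig_dim n0 (p @ [s]) = min (sig_dim n0 p) (weight s)"
  by (simp add: sig_dim_def)

lemma region_snoc:
  "region (hs @ [h]) n0 (p @ [s]) = {x \<in> region hs n0 p. sig h (forward hs x) = s}"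
  by (auto simp: region_def multi_sig_snoc)

lemma multi_sigs_snoc:
  "multi_sigs (hs @ [h]) n0
    = (\<Union>p\<in>multi_sigs hs n0. (\<lambda>s. p @ [s]) ` sig h ` forward hs ` region hs n0 p)"
proof
  show "multi_sigs (hs @ [h]) n0
      \<subseteq> (\<Union>p\<in>multi_sigs hs n0. (\<lambda>s. p @ [s]) ` sig h ` forward hs ` region hs n0 p)"
    by (auto simp: multi_sigs_def region_def multi_sig_snoc)
next
  show "(\<Union>p\<in>multi_sigs hs n0. (\<lambda>s. p @ [s]) ` sig h ` forward hs ` region hs n0 p)
      \<subseteq> multi_sigs (hs @ [h]) n0"
  proof -
    have "p @ [sig h (forward hs y)] \<in> multi_sigs (hs @ [h]) n0" if "y \<in> region hs n0 p" for p y
      using that unfolding multi_sigs_def region_def multi_sig_snoc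
      by (metis (mono_tags) image_eqI mem_Collect_eq)
    then show ?thesis by auto
  qed
qed

lemma multi_sigs_Nil: "multi_sigs [] n0 = {[]}"
proof -
  have "carrier_vec n0 \<noteq> ({} :: real vec set)"
    using zero_carrier_vec by blast
  then show ?thesis
    by (simp add: multi_sigs_def image_constant_conv)
qed

lemma finite_range_multi_sig: "finite (range (multi_sig hs))"
proof (induction hs)
  case (Cons h hs)
  have "multi_sig (h # hs) x \<in> (\<lambda>(s, p). s # p) ` (bin_vecs (dim_row (fst h)) \<times> range (multi_sig hs))"
    for x
    using sig_in_bin_vecs[of h x]
    by (intro image_eqI[of _ _ "(sig h x, multi_sig hs (relu_layer h x))"]) auto
  then have "range (multi_sig (h # hs))
      \<subseteq> (\<lambda>(s, p). s # p) ` (bin_vecs (dim_row (fst h)) \<times> range (multi_sig hs))"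
    by blast
  then show ?case
    using Cons finite_bin_vecs by (meson finite_SigmaI finite_imageI finite_subset)
qed simp

lemma finite_multi_sigs: "finite (multi_sigs hs n0)"
  unfolding multi_sigs_def using finite_range_multi_sig by (rule finite_subset[rotated]) auto

definition in_affine_image :: "nat \<Rightarrow> nat \<Rightarrow> real vec set \<Rightarrow> bool" where
  "in_affine_image n d Y \<longleftrightarrow>
     (\<exists>U c. U \<in> carrier_mat n d \<and> c \<in> carrier_vec n
        \<and> Y \<subseteq> (\<lambda>z. U *\<^sub>v z + c) ` carrier_vec d)"

lemma in_affine_image_subset: "in_affine_image n d Y \<Longrightarrow> Y' \<subseteq> Y \<Longrightarrow> in_affine_image n d Y'"
  unfolding in_affine_image_def by blast

lemma in_affine_image_empty: "in_affine_image n d {}"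
  unfolding in_affine_image_def by (intro exI[of _ "0\<^sub>m n d"] exI[of _ "0\<^sub>v n"]) simp

lemma in_affine_image_carrier_vec: "in_affine_image n n (carrier_vec n)"
  unfolding in_affine_image_def
  by (intro exI[of _ "1\<^sub>m n"] exI[of _ "0\<^sub>v n"]) (auto intro: image_eqI)

lemma in_affine_image_carrier: "in_affine_image n d Y \<Longrightarrow> Y \<subseteq> carrier_vec n"
  unfolding in_affine_image_def by auto

lemma mult_mat_vec_affine:
  assumes "A \<in> carrier_mat m n" "a \<in> carrier_vec m" "U \<in> carrier_mat n d" "c \<in> carrier_vec n"
    and "z \<in> carrier_vec d"
  shows "A *\<^sub>v (U *\<^sub>v z + c) + a = (A * U) *\<^sub>v z + (A *\<^sub>v c + a)"
  using assms
  by (simp add: mult_add_distrib_mat_vec assoc_add_vec[of _ m, symmetric])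

lemma in_affine_image_affine_map:
  assumes "in_affine_image n d Y" "A \<in> carrier_mat m n" "a \<in> carrier_vec m"
  shows "in_affine_image m d ((\<lambda>y. A *\<^sub>v y + a) ` Y)"
proof -
  obtain U c where U: "U \<in> carrier_mat n d" and c: "c \<in> carrier_vec n"
    and Y: "Y \<subseteq> (\<lambda>z. U *\<^sub>v z + c) ` carrier_vec d"
    using assms(1) unfolding in_affine_image_def by blast
  have "(\<lambda>y. A *\<^sub>v y + a) ` Y \<subseteq> (\<lambda>z. (A * U) *\<^sub>v z + (A *\<^sub>v c + a)) ` carrier_vec d"
    using Y mult_mat_vec_affine[OF assms(2,3) U c] by auto
  then show ?thesis
    unfolding in_affine_image_def using assms(2,3) U c
    by (intro exI[of _ "A * U"] exI[of _ "A *\<^sub>v c + a"]) auto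
qed

lemma in_affine_image_coordinate_subspace:
  assumes "A \<subseteq> {..<n}"
  shows "in_affine_image n (card A) {w \<in> carrier_vec n. \<forall>i<n. i \<notin> A \<longrightarrow> w $ i = 0}"
proof -
  obtain f where f: "bij_betw f {..<card A} A"
    using ex_bij_betw_nat_finite finite_subset[OF assms] by (auto simp: atLeast0LessThan)
  define U :: "real mat" where "U = mat n (card A) (\<lambda>(i, j). if f j = i then 1 else 0)"
  have coords: "w = U *\<^sub>v vec (card A) (\<lambda>j. w $ f j)"
    if w: "w \<in> carrier_vec n" "\<forall>i<n. i \<notin> A \<longrightarrow> w $ i = 0" for w
  proof (rule eq_vecI)
    fix i assume "i < dim_vec (U *\<^sub>v vec (card A) (\<lambda>j. w $ f j))"
    then have i: "i < n" by (simp add: U_def)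
    have "(U *\<^sub>v vec (card A) (\<lambda>j. w $ f j)) $ i = (\<Sum>j<card A. (if f j = i then 1 else 0) * w $ f j)"
      using i by (subst mult_mat_vec_nth[of _ n "card A"]) (auto simp: U_def)
    also have "\<dots> = (\<Sum>a\<in>A. (if a = i then 1 else 0) * w $ a)"
      by (rule sum.reindex_bij_betw[OF f])
    also have "\<dots> = (\<Sum>a\<in>A. if a = i then w $ a else 0)"
      by (rule sum.cong) auto
    also have "\<dots> = w $ i"
      using finite_subset[OF assms] w i by auto
    finally show "w $ i = (U *\<^sub>v vec (card A) (\<lambda>j. w $ f j)) $ i" ..
  qed (use that in \<open>simp add: U_def\<close>)
  have "w \<in> (\<lambda>z. U *\<^sub>v z + 0\<^sub>v n) ` carrier_vec (card A)"
    if "w \<in> carrier_vec n" "\<forall>i<n. i \<notin> A \<longrightarrow> w $ i = 0" for w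
    using coords[OF that] that(1) by (intro image_eqI[of _ _ "vec (card A) (\<lambda>j. w $ f j)"]) (auto simp: U_def)
  then show ?thesis
    unfolding in_affine_image_def
    by (intro exI[of _ U] exI[of _ "0\<^sub>v n"]) (auto simp: U_def)
qed

definition act_mat :: "nat vec \<Rightarrow> real mat" where
  "act_mat s = mat (dim_vec s) (dim_vec s) (\<lambda>(i, j). if i = j \<and> s $ i = 1 then 1 else 0)"

lemma act_mat_carrier: "act_mat s \<in> carrier_mat (dim_vec s) (dim_vec s)"
  by (simp add: act_mat_def)

lemma act_mat_mult_vec_nth:
  assumes "u \<in> carrier_vec (dim_vec s)" "i < dim_vec s"
  shows "(act_mat s *\<^sub>v u) $ i = (if s $ i = 1 then u $ i else 0)"
proof -
  have "(act_mat s *\<^sub>v u) $ i = (\<Sum>j<dim_vec s. if j = i \<and> s $ i = 1 then u $ j else 0)"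
    using assms
    by (subst mult_mat_vec_nth[of _ "dim_vec s" "dim_vec s"]) (auto simp: act_mat_def intro!: sum.cong)
  then show ?thesis
    using assms by (cases "s $ i = 1") auto
qed

lemma relu_layer_eq_act_mat:
  assumes "h \<in> RL n n'"
  shows "relu_layer h y = act_mat (sig h y) *\<^sub>v (fst h *\<^sub>v y + snd h)"
proof -
  have W: "fst h \<in> carrier_mat n' n" and b: "snd h \<in> carrier_vec n'"
    using assms by (auto simp: RL_def)
  define u where "u = fst h *\<^sub>v y + snd h"
  have u: "u \<in> carrier_vec n'"
    using b unfolding u_def by (intro carrier_vecI) auto
  have s: "dim_vec (sig h y) = n'"
    using W by (simp add: sig_def)
  show ?thesis
    unfolding u_def[symmetric]
  proof (rule eq_vecI)
    fix i assume "i < dim_vec (act_mat (sig h y) *\<^sub>v u)"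
    then have i: "i < n'"
      using s by (simp add: act_mat_def)
    have "sig h y $ i = (if u $ i > 0 then 1 else 0)"
      using i W by (simp add: sig_def u_def)
    moreover have "relu_layer h y $ i = max 0 (u $ i)"
      using i carrier_vecD[OF u] by (simp add: relu_layer_def relu_def u_def)
    moreover have "(act_mat (sig h y) *\<^sub>v u) $ i = (if sig h y $ i = 1 then u $ i else 0)"
      using u s i by (intro act_mat_mult_vec_nth) auto
    ultimately show "relu_layer h y $ i = (act_mat (sig h y) *\<^sub>v u) $ i"
      by simp
  qed (use b s in \<open>simp add: relu_layer_def act_mat_def u_def\<close>)
qed

lemma card_active_eq_weight:
  assumes "s \<in> bin_vecs n"
  shows "card {i. i < n \<and> s $ i = 1} = weight s"
proof -
  have "weight s = (\<Sum>i<n. if s $ i = 1 then 1 else 0)"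
    using assms unfolding weight_def bin_vecs_def
    by (auto intro!: sum.cong simp: le_Suc_eq)
  also have "\<dots> = card {i. i < n \<and> s $ i = 1}"
    by (simp add: sum.If_cases Int_def)
  finally show ?thesis ..
qed

(* On the region of s the layer is the affine map y \<mapsto> act_mat s (W y + b), whose values
   moreover vanish outside the |s| active coordinates. *)
lemma in_affine_image_relu_layer:
  assumes h: "h \<in> RL n n'" and Y: "in_affine_image n d Y"
  shows "in_affine_image n' (min d (weight s)) (relu_layer h ` {y \<in> Y. sig h y = s})"
proof (cases "{y \<in> Y. sig h y = s} = {}")
  case True
  then show ?thesis
    by (metis image_empty in_affine_image_empty)
next
  case False
  have W: "fst h \<in> carrier_mat n' n" and b: "snd h \<in> carrier_vec n'"
    using h by (auto simp: RL_def)
  have s: "s \<in> bin_vecs n'"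
    using False sig_in_bin_vecs[of h] W by auto
  then have S: "act_mat s \<in> carrier_mat n' n'"
    using act_mat_carrier dim_vec_bin_vecs by metis
  have relu: "relu_layer h y = (act_mat s * fst h) *\<^sub>v y + act_mat s *\<^sub>v snd h"
    if "y \<in> Y" "sig h y = s" for y
  proof -
    have y: "y \<in> carrier_vec n"
      using in_affine_image_carrier[OF Y] that(1) by blast
    have "relu_layer h y = act_mat s *\<^sub>v (fst h *\<^sub>v y + snd h)"
      using relu_layer_eq_act_mat[OF h, of y] that(2) by simp
    also have "\<dots> = (act_mat s * fst h) *\<^sub>v y + act_mat s *\<^sub>v snd h"
      using S W b y by (simp add: mult_add_distrib_mat_vec[of _ n' n'])
    finally show ?thesis .
  qed
  show ?thesis
  proof (cases "d \<le> weight s")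
    case True
    have "relu_layer h ` {y \<in> Y. sig h y = s}
        \<subseteq> (\<lambda>y. (act_mat s * fst h) *\<^sub>v y + act_mat s *\<^sub>v snd h) ` Y"
      using relu by auto
    moreover have "in_affine_image n' d ((\<lambda>y. (act_mat s * fst h) *\<^sub>v y + act_mat s *\<^sub>v snd h) ` Y)"
      using S W b by (intro in_affine_image_affine_map[OF Y]) auto
    ultimately show ?thesis
      using True in_affine_image_subset by (simp add: min_absorb1)
  next
    case False
    let ?A = "{i. i < n' \<and> s $ i = 1}"
    have "relu_layer h ` {y \<in> Y. sig h y = s}
        \<subseteq> {w \<in> carrier_vec n'. \<forall>i<n'. i \<notin> ?A \<longrightarrow> w $ i = 0}"
    proof -
      have "relu_layer h y \<in> {w \<in> carrier_vec n'. \<forall>i<n'. i \<notin> ?A \<longrightarrow> w $ i = 0}"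
        if "sig h y = s" for y
      proof -
        let ?u = "fst h *\<^sub>v y + snd h"
        have u: "?u \<in> carrier_vec (dim_vec s)"
          using b dim_vec_bin_vecs[OF s] by (intro carrier_vecI) auto
        have "relu_layer h y = act_mat s *\<^sub>v ?u"
          using relu_layer_eq_act_mat[OF h, of y] that by simp
        then show ?thesis
          using act_mat_mult_vec_nth[OF u] act_mat_carrier[of s] dim_vec_bin_vecs[OF s]
          by (auto intro: carrier_vecI)
      qed
      then show ?thesis by blast
    qed
    moreover have "?A \<subseteq> {..<n'}"
      by auto
    ultimately show ?thesis
      using in_affine_image_coordinate_subspace[of ?A n'] card_active_eq_weight[OF s] False
        in_affine_image_subset by (simp add: min_absorb2)
  qed
qed

lemma sig_eq_of_preact_eq:
  "dim_row (fst h) = dim_row (fst h') \<Longrightarrow> fst h *\<^sub>v x + snd h = fst h' *\<^sub>v x' + snd h'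
    \<Longrightarrow> sig h x = sig h' x'"
  unfolding sig_def by simp

(* For d \<le> n' precompose the layer with the parametrisation of Y; otherwise read the
   signature off the pre-activation W y + b with the layer (1, 0). *)
lemma sig_image_subset_sigs:
  assumes h: "h \<in> RL n n'" and Y: "in_affine_image n d Y"
  shows "\<exists>h'\<in>RL (min d n') n'. sig h ` Y \<subseteq> sigs h' (min d n')"
proof -
  have W: "fst h \<in> carrier_mat n' n" and b: "snd h \<in> carrier_vec n'"
    using h by (auto simp: RL_def)
  obtain U c where U: "U \<in> carrier_mat n d" and c: "c \<in> carrier_vec n"
    and YU: "Y \<subseteq> (\<lambda>z. U *\<^sub>v z + c) ` carrier_vec d"
    using Y unfolding in_affine_image_def by blast
  show ?thesis
  proof (cases "d \<le> n'")
    case True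
    let ?h' = "(fst h * U, fst h *\<^sub>v c + snd h)"
    have "sig h (U *\<^sub>v z + c) = sig ?h' z" if "z \<in> carrier_vec d" for z
      using mult_mat_vec_affine[OF W b U c that] W U by (intro sig_eq_of_preact_eq) auto
    then have "sig h ` Y \<subseteq> sigs ?h' d"
      using YU by (auto simp: sigs_def)
    moreover have "?h' \<in> RL d n'"
      using W U b c by (simp add: RL_def)
    ultimately show ?thesis
      using True by (auto simp: min_absorb1)
  next
    case False
    let ?h' = "(1\<^sub>m n' :: real mat, 0\<^sub>v n')"
    have u: "fst h *\<^sub>v y + snd h \<in> carrier_vec n'" for y
      using b by (intro carrier_vecI) auto
    then have "sig h y = sig ?h' (fst h *\<^sub>v y + snd h)" for y
      using W by (intro sig_eq_of_preact_eq) auto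
    with u have "sig h ` Y \<subseteq> sigs ?h' n'"
      by (auto simp: sigs_def)
    moreover have "?h' \<in> RL n' n'"
      by (simp add: RL_def)
    ultimately show ?thesis
      using False by (auto simp: min_absorb2)
  qed
qed

lemma card_sig_image_le_bound_col_tail:
  assumes G: "in_Gamma \<gamma>" and "1 \<le> n'" and h: "h \<in> RL n n'" and Y: "in_affine_image n d Y"
  shows "real (card {s \<in> sig h ` Y. J \<le> min d (weight s)}) \<le> bound_col_tail \<gamma> n' J (min d n')"
proof -
  obtain h' where h': "h' \<in> RL (min d n') n'" and sub: "sig h ` Y \<subseteq> sigs h' (min d n')"
    using sig_image_subset_sigs[OF h Y] by blast
  show ?thesis
  proof (cases "J \<le> min d n'")
    case True
    have "card {s \<in> sig h ` Y. J \<le> min d (weight s)} \<le> card {s \<in> sigs h' (min d n'). J \<le> weight s}"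
      using sub finite_sigs[OF h'] by (intro card_mono) auto
    also have "\<dots> \<le> tail (\<gamma> (min d n') n') J"
      using card_sigs_weight_ge_le_tail_gamma[OF G \<open>1 \<le> n'\<close> _ h' True] by simp
    finally show ?thesis
      using G \<open>1 \<le> n'\<close> True by (simp add: bound_col_tail_eq in_Gamma_def)
  next
    case False
    have "weight s \<le> n'" if "s \<in> sig h ` Y" for s
      using that sigs_subset_bin_vecs[OF h'] sub weight_le_dim by blast
    then have empty: "{s \<in> sig h ` Y. J \<le> min d (weight s)} = {}"
      using False by fastforce
    show ?thesis
      unfolding empty using bound_col_tail_nonneg by simp
  qed
qed

lemma card_multi_sigs_snoc_le:
  "card {q \<in> multi_sigs (hs @ [h]) n0. J \<le> sig_dim n0 q}
    \<le> (\<Sum>p\<in>multi_sigs hs n0.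
          card {s \<in> sig h ` forward hs ` region hs n0 p. J \<le> min (sig_dim n0 p) (weight s)})"
proof -
  let ?T = "\<lambda>p. {s \<in> sig h ` forward hs ` region hs n0 p. J \<le> min (sig_dim n0 p) (weight s)}"
  have "?T p \<subseteq> bin_vecs (dim_row (fst h))" for p
    using sig_in_bin_vecs by blast
  then have fin: "finite (?T p)" for p
    using finite_bin_vecs finite_subset by blast
  have "{q \<in> multi_sigs (hs @ [h]) n0. J \<le> sig_dim n0 q}
      = (\<Union>p\<in>multi_sigs hs n0. (\<lambda>s. p @ [s]) ` ?T p)"
    unfolding multi_sigs_snoc by (auto simp: sig_dim_snoc)
  then have "card {q \<in> multi_sigs (hs @ [h]) n0. J \<le> sig_dim n0 q}
      \<le> (\<Sum>p\<in>multi_sigs hs n0. card ((\<lambda>s. p @ [s]) ` ?T p))"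
    using card_UN_le[OF finite_multi_sigs] by simp
  also have "\<dots> \<le> (\<Sum>p\<in>multi_sigs hs n0. card (?T p))"
    by (intro sum_mono card_image_le fin)
  finally show ?thesis .
qed

lemma card_multi_sigs_snoc_sig_dim_ge_le:
  assumes G: "in_Gamma \<gamma>" and n': "1 \<le> n'" and h: "h \<in> RL n n'" and v: "v \<in> carrier_vec (n + 1)"
    and aff: "\<And>p. in_affine_image n (sig_dim n0 p) (forward hs ` region hs n0 p)"
    and counts: "\<And>K. real (card {p \<in> multi_sigs hs n0. K \<le> sig_dim n0 p}) \<le> (\<Sum>j\<in>{K..<n+1}. v $ j)"
  shows "real (card {q \<in> multi_sigs (hs @ [h]) n0. J \<le> sig_dim n0 q})
    \<le> (\<Sum>i\<in>{J..<n'+1}. (bound_mat \<gamma> n' *\<^sub>v (conn_mat n n' *\<^sub>v v)) $ i)"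
proof -
  define g where "g k = bound_col_tail \<gamma> n' J (min k n')" for k
  have "mono g"
    unfolding g_def by (intro monoI bound_col_tail_mono[OF G n']) auto
  have "real (card {q \<in> multi_sigs (hs @ [h]) n0. J \<le> sig_dim n0 q})
      \<le> (\<Sum>p\<in>multi_sigs hs n0.
            real (card {s \<in> sig h ` forward hs ` region hs n0 p. J \<le> min (sig_dim n0 p) (weight s)}))"
    unfolding of_nat_sum[symmetric] by (rule of_nat_mono[OF card_multi_sigs_snoc_le])
  also have "\<dots> \<le> (\<Sum>p\<in>multi_sigs hs n0. g (sig_dim n0 p))"
    unfolding g_def by (intro sum_mono card_sig_image_le_bound_col_tail[OF G n' h aff])
  also have "\<dots> \<le> (\<Sum>j<n+1. v $ j * g j)"
    by (rule sum_mono_fun_le_of_tail_counts[OF finite_multi_sigs \<open>mono g\<close> _ counts])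
      (simp add: g_def bound_col_tail_nonneg)
  also have "\<dots> = (\<Sum>k<n'+1. (conn_mat n n' *\<^sub>v v) $ k * bound_col_tail \<gamma> n' J k)"
    unfolding g_def by (rule sum_conn_mat_mult[OF v, symmetric])
  also have "\<dots> = (\<Sum>i\<in>{J..<n'+1}. (bound_mat \<gamma> n' *\<^sub>v (conn_mat n n' *\<^sub>v v)) $ i)"
    using v by (intro sum_tail_bound_mat_mult[symmetric] mult_mat_vec_carrier) (auto simp: conn_mat_def)
  finally show ?thesis .
qed

lemma layers_in_RL_snoc:
  "(\<forall>i<length (hs @ [h]). (hs @ [h]) ! i \<in> RL (ns i) (ns (Suc i)))
    \<longleftrightarrow> (\<forall>i<length hs. hs ! i \<in> RL (ns i) (ns (Suc i)))
      \<and> h \<in> RL (ns (length hs)) (ns (Suc (length hs)))"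
  by (auto simp: nth_append less_Suc_eq)

lemma in_affine_image_forward_region:
  assumes "\<forall>i<length hs. hs ! i \<in> RL (ns i) (ns (Suc i))"
  shows "in_affine_image (ns (length hs)) (sig_dim (ns 0) p) (forward hs ` region hs (ns 0) p)"
  using assms
proof (induction hs arbitrary: p rule: rev_induct)
  case Nil
  show ?case
  proof (cases "p = []")
    case True
    then show ?thesis
      using in_affine_image_carrier_vec in_affine_image_subset
      by (auto simp: forward_def region_def sig_dim_def)
  next
    case False
    then show ?thesis
      using in_affine_image_empty by (simp add: region_def)
  qed
next
  case (snoc h hs)
  from snoc.prems have hs: "\<forall>i<length hs. hs ! i \<in> RL (ns i) (ns (Suc i))"
    and h: "h \<in> RL (ns (length hs)) (ns (Suc (length hs)))"
    unfolding layers_in_RL_snoc by blast+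
  note IH = snoc.IH[OF hs]
  show ?case
  proof (cases p rule: rev_cases)
    case Nil
    then show ?thesis
      using in_affine_image_empty by (simp add: region_def multi_sig_snoc)
  next
    case (snoc p0 s)
    have "forward (hs @ [h]) ` region (hs @ [h]) (ns 0) p
        = relu_layer h ` {y \<in> forward hs ` region hs (ns 0) p0. sig h y = s}"
      unfolding snoc region_snoc forward_snoc by auto
    then show ?thesis
      using in_affine_image_relu_layer[OF h IH] by (simp add: snoc sig_dim_snoc)
  qed
qed

lemma card_multi_sigs_sig_dim_ge_le_chain_mat:
  assumes G: "in_Gamma \<gamma>" and "\<forall>l\<le>length hs. 1 \<le> ns l"
    and "\<forall>i<length hs. hs ! i \<in> RL (ns i) (ns (Suc i))"
  shows "real (card {p \<in> multi_sigs hs (ns 0). K \<le> sig_dim (ns 0) p})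
    \<le> (\<Sum>j\<in>{K..<ns (length hs) + 1}.
          (chain_mat \<gamma> ns (length hs) *\<^sub>v unit_vec (ns 0 + 1) (ns 0)) $ j)"
  using assms(2,3)
proof (induction hs arbitrary: K rule: rev_induct)
  case Nil
  have "{p \<in> multi_sigs [] (ns 0). K \<le> sig_dim (ns 0) p} = (if K \<le> ns 0 then {[]} else {})"
    unfolding multi_sigs_Nil by (cases "K \<le> ns 0") (auto simp: sig_dim_def)
  moreover have "(\<Sum>j\<in>{K..<ns 0 + 1}. unit_vec (ns 0 + 1) (ns 0) $ j) = (if K \<le> ns 0 then 1 else 0)"
    by (simp add: sum.If_cases)
  moreover have "chain_mat \<gamma> ns 0 *\<^sub>v unit_vec (ns 0 + 1) (ns 0) = unit_vec (ns 0 + 1) (ns 0)"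
    by simp
  ultimately show ?case
    unfolding list.size(3) by simp
next
  case (snoc h hs)
  from snoc.prems(2) have hs: "\<forall>i<length hs. hs ! i \<in> RL (ns i) (ns (Suc i))"
    and h: "h \<in> RL (ns (length hs)) (ns (Suc (length hs)))"
    unfolding layers_in_RL_snoc by blast+
  have "1 \<le> ns (Suc (length hs))"
    using snoc.prems(1) by simp
  then show ?case
    unfolding length_append_singleton chain_mat_Suc_mult_vec[OF unit_vec_carrier]
    using snoc.IH snoc.prems(1) hs
    by (intro card_multi_sigs_snoc_sig_dim_ge_le[OF G _ h _ in_affine_image_forward_region[OF hs]]
        mult_mat_vec_carrier[OF chain_mat_carrier unit_vec_carrier]) auto
qed

theorem mainTheorem2:
  fixes L :: nat and ns :: "nat \<Rightarrow> nat" and hs :: "(real mat \<times> real vec) list"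
    and \<gamma> :: "nat \<Rightarrow> nat \<Rightarrow> nat \<Rightarrow> nat"
  assumes "1 \<le> L"
    and "\<forall>l\<le>L. 1 \<le> ns l"
    and "length hs = L"
    and "\<forall>l<L. hs ! l \<in> RL (ns l) (ns (Suc l))"
    and "in_Gamma \<gamma>"
  shows "real (card (multi_sigs hs (ns 0)))
           \<le> norm1 (chain_mat \<gamma> ns L *\<^sub>v unit_vec (ns 0 + 1) (ns 0))"
proof -
  let ?v = "chain_mat \<gamma> ns L *\<^sub>v unit_vec (ns 0 + 1) (ns 0)"
  have "real (card (multi_sigs hs (ns 0))) \<le> (\<Sum>j\<in>{0..<ns L + 1}. ?v $ j)"
    using card_multi_sigs_sig_dim_ge_le_chain_mat[OF assms(5), of hs ns 0] assms(2-4) by simp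
  also have "\<dots> \<le> norm1 ?v"
  proof -
    have dim: "dim_vec ?v = ns L + 1"
      using chain_mat_carrier[of \<gamma> ns L] by simp
    show ?thesis
      unfolding norm1_def dim atLeast0LessThan by (intro sum_mono abs_ge_self)
  qed
  finally show ?thesis .
qed

end
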